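(* For every nonnegative integer $n$, $$E(n,n,n)=\sum_{k=0}^n\binom{n}{k}^3=\sum_{k=\lceil n/2\rceil}^{n}\binom{n}{k}^2\binom{2k}{n} =\frac{1}{2^n}\sum_{k=\lceil n/2\rceil}^{n}\binom{2k}{n}\binom{2k}{k}\binom{2n-2k}{n-k}$$ $$=\sum_{k=0}^{n}\binom{n+2k}{3k}\binom{2k}{k}\binom{3k}{k}(-4)^{n-k} =\sum_{k=0}^{\lfloor n/2\rfloor}\binom{n+k}{3k}\binom{2k}{k}\binom{3k}{k}2^{n-2k}.$$
   Context: For nonnegative integers $n_1,\dots,n_S$, $E(n_1,\dots,n_S)$ denotes the number of block derangements: $S$ players hold $n_1,\dots,n_S$ distinct cards respectively; all $N=n_1+\dots+n_S$ cards are redealt so that player $j$ again receives exactly $n_j$ cards (only which cards each player gets matters); $E$ counts the deals in which no player receives any card he originally held. Equivalently, $E(n_1,\dots,n_S)$ is the coefficient of $x_1^{n_1}\cdots x_S^{n_S}$ in $\prod_{j=1}^S(x_1+\dots+x_S-x_j)^{n_j}$. By convention $E(0,\dots,0)=1$. *)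

theory Defs
  imports "HOL-Library.FuncSet" Complex_Main
begin

text \<open>The list ns = [n_1,...,n_S] (player j is indexed by j < S).
  Cards are pairs (j, i) with j < S, i < n_j: card i originally held by player j.\<close>

definition cards :: "nat list \<Rightarrow> (nat \<times> nat) set" where
  "cards ns = {(j, i). j < length ns \<and> i < ns ! j}"

definition block_derangements :: "nat list \<Rightarrow> ((nat \<times> nat) \<Rightarrow> nat) set" where
  "block_derangements ns =
     {f \<in> cards ns \<rightarrow>\<^sub>E {..<length ns}.
        (\<forall>j < length ns. card {c \<in> cards ns. f c = j} = ns ! j) \<and>
        (\<forall>c \<in> cards ns. f c \<noteq> fst c)}"

definition E :: "nat list \<Rightarrow> nat" where
  "E ns = card (block_derangements ns)"

end

theory Submission
  imports Defs
begin

text \<open>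
  Write \<open>a\<^sub>n\<close> for the Franel numbers, defined by \<open>a\<^sub>0 = 1\<close>, \<open>a\<^sub>1 = 2\<close> and the
  recurrence \<open>(n+2)\<^sup>2 a\<^sub>n\<^sub>+\<^sub>2 = (7n\<^sup>2+21n+16) a\<^sub>n\<^sub>+\<^sub>1 + 8(n+1)\<^sup>2 a\<^sub>n\<close>.

  With three players holding \<open>n\<close> cards each, a block derangement is
      determined by the set \<open>A\<close> of cards player 0 passes to player 1, the set \<open>B\<close> player 1
      passes to player 2 and the set \<open>D\<close> player 2 passes to player 0; the deal is balanced
      iff \<open>|A| = |B| = |D|\<close>.  Hence \<open>E(n,n,n) = \<Sum>\<^sub>k C(n,k)\<^sup>3\<close>.

  Each of the five sums has the form \<open>\<Sum>\<^sub>k F(n,k)\<close>, and for each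
      summand we give an explicit certificate \<open>G(n,k)\<close> (in the spirit of Zeilberger's
      algorithm) such that applying the Franel recurrence operator to \<open>F(\<cdot>,k)\<close> yields
      \<open>G(n,k+1) - G(n,k)\<close>.  Summing over \<open>k\<close> telescopes, so every sum satisfies the
      recurrence; checking the two initial values shows that all five sums equal \<open>a\<^sub>n\<close>.
      The certificate identities are verified by writing every binomial coefficient through
      the reciprocal factorial \<open>1/z!\<close> (extended by \<open>0\<close> to negative integers), which turns them
      into polynomial identities.
\<close>

section \<open>Block derangements of three equal hands\<close>

lemma nth_three_hands: "j < 3 \<Longrightarrow> [n, n, n] ! j = n"
  by (cases j; cases "j - 1") (simp_all add: nth_Cons')

lemma cards_three_hands: "cards [n, n, n] = {..<3} \<times> {..<n}"
proof -
  have "j < 3 \<Longrightarrow> [n, n, n] ! j = n" for j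
    by (rule nth_three_hands)
  then show ?thesis
    unfolding cards_def by auto
qed

definition dealt :: "nat \<Rightarrow> (nat \<times> nat \<Rightarrow> nat) \<Rightarrow> nat \<Rightarrow> nat \<Rightarrow> nat set" where
  "dealt n f j t = {i. i < n \<and> f (j, i) = t}"

lemma dealt_subset: "dealt n f j t \<subseteq> {..<n}"
  unfolding dealt_def by auto

lemma card_dealt_le: "card (dealt n f j t) \<le> n"
  using card_mono[OF _ dealt_subset] by fastforce

lemma card_received:
  "card {c \<in> cards [n, n, n]. f c = t}
     = card (dealt n f 0 t) + card (dealt n f 1 t) + card (dealt n f 2 t)"
proof -
  define part where "part j = Pair j ` dealt n f j t" for j :: nat
  have split: "{c \<in> cards [n, n, n]. f c = t} = (part 0 \<union> part 1) \<union> part 2"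
  proof (intro equalityI subsetI)
    fix c assume "c \<in> {c \<in> cards [n, n, n]. f c = t}"
    then obtain j i where "c = (j, i)" "j < 3" "i < n" "f (j, i) = t"
      by (auto simp: cards_three_hands)
    moreover have "j = 0 \<or> j = 1 \<or> j = 2" using \<open>j < 3\<close> by auto
    ultimately show "c \<in> (part 0 \<union> part 1) \<union> part 2"
      unfolding part_def dealt_def by auto
  qed (auto simp: part_def dealt_def cards_three_hands)
  have fin: "finite (part j)" for j
    unfolding part_def using finite_subset[OF dealt_subset] by simp
  have card_part: "card (part j) = card (dealt n f j t)" for j
    unfolding part_def by (simp add: card_image inj_on_def)
  have "card ((part 0 \<union> part 1) \<union> part 2) = card (part 0 \<union> part 1) + card (part 2)"
    by (rule card_Un_disjoint) (use fin in \<open>auto simp: part_def\<close>)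
  also have "card (part 0 \<union> part 1) = card (part 0) + card (part 1)"
    by (rule card_Un_disjoint) (use fin in \<open>auto simp: part_def\<close>)
  finally show ?thesis
    unfolding split card_part .
qed

lemma derangement_targets:
  assumes "f \<in> block_derangements [n, n, n]" "i < n"
  shows "f (0, i) = 1 \<or> f (0, i) = 2" "f (1, i) = 2 \<or> f (1, i) = 0" "f (2, i) = 0 \<or> f (2, i) = 1"
proof -
  have deal: "f \<in> cards [n, n, n] \<rightarrow>\<^sub>E {..<length [n, n, n]}"
    and deranged: "\<forall>c \<in> cards [n, n, n]. f c \<noteq> fst c"
    using assms(1) unfolding block_derangements_def by blast+
  have "f (j, i) < 3 \<and> f (j, i) \<noteq> j" if "j < 3" for j
  proof -
    have c: "(j, i) \<in> cards [n, n, n]" using that assms(2) by (simp add: cards_three_hands)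
    have "f (j, i) \<in> {..<length [n, n, n]}" using deal c by (rule PiE_mem)
    moreover have "f (j, i) \<noteq> fst (j, i)" using deranged c by blast
    ultimately show ?thesis by simp
  qed
  from this[of 0] this[of 1] this[of 2]
  show "f (0, i) = 1 \<or> f (0, i) = 2" "f (1, i) = 2 \<or> f (1, i) = 0" "f (2, i) = 0 \<or> f (2, i) = 1"
    by auto
qed

lemma derangement_receives:
  assumes "f \<in> block_derangements [n, n, n]" "t < 3"
  shows "card {c \<in> cards [n, n, n]. f c = t} = n"
proof -
  have "\<forall>j < length [n, n, n]. card {c \<in> cards [n, n, n]. f c = j} = [n, n, n] ! j"
    using assms(1) unfolding block_derangements_def by blast
  then show ?thesis using assms(2) nth_three_hands[of t n] by simp
qed

definition equicard_triples :: "nat \<Rightarrow> (nat set \<times> nat set \<times> nat set) set" where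
  "equicard_triples n = {(A, B, D). A \<subseteq> {..<n} \<and> B \<subseteq> {..<n} \<and> D \<subseteq> {..<n}
      \<and> card A = card B \<and> card B = card D}"

definition encode :: "nat \<Rightarrow> (nat \<times> nat \<Rightarrow> nat) \<Rightarrow> nat set \<times> nat set \<times> nat set" where
  "encode n f = (dealt n f 0 1, dealt n f 1 2, dealt n f 2 0)"

definition decode :: "nat \<Rightarrow> nat set \<times> nat set \<times> nat set \<Rightarrow> (nat \<times> nat \<Rightarrow> nat)" where
  "decode n X = restrict (\<lambda>(j, i).
      if j = 0 then (if i \<in> fst X then 1 else 2)
      else if j = 1 then (if i \<in> fst (snd X) then 2 else 0)
      else (if i \<in> snd (snd X) then 0 else 1)) (cards [n, n, n])"

lemma dealt_complement:
  assumes "\<And>i. i < n \<Longrightarrow> f (j, i) = a \<or> f (j, i) = b" "a \<noteq> b"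
  shows "dealt n f j b = {..<n} - dealt n f j a"
  using assms unfolding dealt_def by auto

lemma card_complement: "Y \<subseteq> {..<n} \<Longrightarrow> card ({..<n} - Y) = n - card Y"
  by (simp add: card_Diff_subset finite_subset)

text \<open>Balance of the deal forces \<open>|A| = |B| = |D|\<close>: player 1 receives \<open>|A| + (n - |D|)\<close>
  cards and player 2 receives \<open>(n - |A|) + |B|\<close> cards.\<close>

lemma encode_equicard:
  assumes f: "f \<in> block_derangements [n, n, n]"
  shows "encode n f \<in> equicard_triples n"
proof -
  note targets = derangement_targets[OF f]
  have none: "dealt n f 1 1 = {}" "dealt n f 2 2 = {}"
    using targets unfolding dealt_def by fastforce+
  have rest: "card (dealt n f 2 1) = n - card (dealt n f 2 0)"
             "card (dealt n f 0 2) = n - card (dealt n f 0 1)"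
    using dealt_complement[of n f 2 0 1] dealt_complement[of n f 0 1 2] targets
      card_complement[OF dealt_subset] by auto
  have "card (dealt n f 0 1) + (n - card (dealt n f 2 0)) = n"
       "(n - card (dealt n f 0 1)) + card (dealt n f 1 2) = n"
    using derangement_receives[OF f, of 1] derangement_receives[OF f, of 2]
      card_received[of n f 1] card_received[of n f 2] none rest by simp_all
  then have "card (dealt n f 0 1) = card (dealt n f 1 2)"
            "card (dealt n f 0 1) = card (dealt n f 2 0)"
    using card_dealt_le[of n f 2 0] card_dealt_le[of n f 0 1] by arith+
  then show ?thesis
    unfolding encode_def equicard_triples_def using dealt_subset by auto
qed

text \<open>A deal is determined by its code, since each card has only two possible receivers.\<close>

lemma encode_inj: "inj_on (encode n) (block_derangements [n, n, n])"
proof (rule inj_onI)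
  fix f g
  assume f: "f \<in> block_derangements [n, n, n]" and g: "g \<in> block_derangements [n, n, n]"
    and eq: "encode n f = encode n g"
  have same: "dealt n f 0 1 = dealt n g 0 1" "dealt n f 1 2 = dealt n g 1 2"
             "dealt n f 2 0 = dealt n g 2 0"
    using eq unfolding encode_def by auto
  show "f = g"
  proof (rule PiE_ext)
    show "f \<in> cards [n, n, n] \<rightarrow>\<^sub>E {..<length [n, n, n]}"
         "g \<in> cards [n, n, n] \<rightarrow>\<^sub>E {..<length [n, n, n]}"
      using f g unfolding block_derangements_def by blast+
  next
    fix c assume "c \<in> cards [n, n, n]"
    then obtain j i where ji: "c = (j, i)" "j < 3" "i < n" by (auto simp: cards_three_hands)
    have "i \<in> dealt n h j t \<longleftrightarrow> h (j, i) = t" for h t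
      using ji unfolding dealt_def by auto
    moreover have "j = 0 \<or> j = 1 \<or> j = 2" using ji by auto
    ultimately show "f c = g c"
      using same derangement_targets[OF f ji(3)] derangement_targets[OF g ji(3)] ji(1) by metis
  qed
qed

lemma decode_derangement:
  assumes X: "(A, B, D) \<in> equicard_triples n"
  shows "decode n (A, B, D) \<in> block_derangements [n, n, n]"
    and "encode n (decode n (A, B, D)) = (A, B, D)"
proof -
  define f where "f = decode n (A, B, D)"
  have sub: "A \<subseteq> {..<n}" "B \<subseteq> {..<n}" "D \<subseteq> {..<n}"
    and eq: "card A = card B" "card B = card D"
    using X unfolding equicard_triples_def by auto
  have val: "f (0, i) = (if i \<in> A then 1 else 2)"
            "f (1, i) = (if i \<in> B then 2 else 0)"
            "f (2, i) = (if i \<in> D then 0 else 1)" if "i < n" for i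
    using that unfolding f_def decode_def by (auto simp: cards_three_hands)
  have targets: "f (0, i) = 1 \<longleftrightarrow> i \<in> A" "f (0, i) = 2 \<longleftrightarrow> i \<notin> A" "f (0, i) \<noteq> 0"
      "f (1, i) = 2 \<longleftrightarrow> i \<in> B" "f (1, i) = 0 \<longleftrightarrow> i \<notin> B" "f (1, i) \<noteq> 1"
      "f (2, i) = 0 \<longleftrightarrow> i \<in> D" "f (2, i) = 1 \<longleftrightarrow> i \<notin> D" "f (2, i) \<noteq> 2"
    if "i < n" for i
    using val[OF that] by simp_all
  have parts: "dealt n f 0 1 = A" "dealt n f 0 2 = {..<n} - A" "dealt n f 0 0 = {}"
     "dealt n f 1 2 = B" "dealt n f 1 0 = {..<n} - B" "dealt n f 1 1 = {}"
     "dealt n f 2 0 = D" "dealt n f 2 1 = {..<n} - D" "dealt n f 2 2 = {}"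
    unfolding dealt_def using targets sub by auto
  have le: "card A \<le> n" "card B \<le> n" "card D \<le> n"
    using sub card_mono[of "{..<n}"] by fastforce+
  have counts: "card {c \<in> cards [n, n, n]. f c = 0} = n"
       "card {c \<in> cards [n, n, n]. f c = 1} = n"
       "card {c \<in> cards [n, n, n]. f c = 2} = n"
    unfolding card_received parts using card_complement sub eq le by simp_all
  have receives: "\<forall>j < length [n, n, n]. card {c \<in> cards [n, n, n]. f c = j} = [n, n, n] ! j"
  proof (intro allI impI)
    fix j assume "j < length [n, n, n]"
    then have "j = 0 \<or> j = 1 \<or> j = 2" by auto
    then show "card {c \<in> cards [n, n, n]. f c = j} = [n, n, n] ! j"
      using counts by auto
  qed
  have "f \<in> cards [n, n, n] \<rightarrow>\<^sub>E {..<length [n, n, n]}"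
    unfolding f_def decode_def by (auto simp: restrict_PiE_iff cards_three_hands)
  moreover have "\<forall>c \<in> cards [n, n, n]. f c \<noteq> fst c"
    unfolding f_def decode_def by (auto simp: cards_three_hands)
  ultimately have "f \<in> block_derangements [n, n, n]"
    unfolding block_derangements_def using receives by blast
  then show "decode n (A, B, D) \<in> block_derangements [n, n, n]"
    by (simp add: f_def)
  show "encode n (decode n (A, B, D)) = (A, B, D)"
    unfolding encode_def f_def[symmetric] using parts by simp
qed

text \<open>Grouping the triples by their common size \<open>k\<close> gives \<open>\<Sum>\<^sub>k C(n,k)\<^sup>3\<close> of them.\<close>

lemma card_equicard_triples: "card (equicard_triples n) = (\<Sum>k\<le>n. (n choose k) ^ 3)"
proof -
  define S where "S k = {A. A \<subseteq> {..<n} \<and> card A = k}" for k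
  have card_S: "card (S k) = n choose k" for k
    unfolding S_def using n_subsets[of "{..<n}" k] by simp
  have "finite (S k)" for k
    unfolding S_def by (rule finite_subset[of _ "Pow {..<n}"]) auto
  moreover have "equicard_triples n = (\<Union>k\<le>n. S k \<times> S k \<times> S k)"
    unfolding equicard_triples_def S_def using card_mono[of "{..<n}"] by fastforce
  ultimately have "card (equicard_triples n) = (\<Sum>k\<le>n. card (S k \<times> S k \<times> S k))"
    by (simp add: card_UN_disjoint S_def disjoint_iff)
  then show ?thesis
    by (simp add: card_cartesian_product card_S power3_eq_cube mult.assoc)
qed

theorem E_three_hands: "E [n, n, n] = (\<Sum>k\<le>n. (n choose k) ^ 3)"
proof -
  have "encode n ` block_derangements [n, n, n] = equicard_triples n"
  proof
    show "encode n ` block_derangements [n, n, n] \<subseteq> equicard_triples n"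
      using encode_equicard by blast
    show "equicard_triples n \<subseteq> encode n ` block_derangements [n, n, n]"
    proof
      fix X assume X: "X \<in> equicard_triples n"
      obtain A B D where "X = (A, B, D)" by (cases X)
      then show "X \<in> encode n ` block_derangements [n, n, n]"
        using decode_derangement[of A B D n] X by (metis image_eqI)
    qed
  qed
  then show ?thesis
    unfolding E_def using card_image[OF encode_inj] card_equicard_triples by metis
qed


section \<open>The Franel recurrence and creative telescoping\<close>

definition franel_op :: "(nat \<Rightarrow> real) \<Rightarrow> nat \<Rightarrow> real" where
  "franel_op a n = (real n + 2)^2 * a (n + 2) - (7 * real n^2 + 21 * real n + 16) * a (n + 1)
                   - 8 * (real n + 1)^2 * a n"

lemma franel_op_sum: "franel_op (\<lambda>m. \<Sum>k\<in>K. F m k) n = (\<Sum>k\<in>K. franel_op (\<lambda>m. F m k) n)"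
  by (simp add: franel_op_def sum_subtractf sum_distrib_left)

fun franel :: "nat \<Rightarrow> real" where
  "franel 0 = 1"
| "franel (Suc 0) = 2"
| "franel (Suc (Suc n)) =
     ((7 * real n^2 + 21 * real n + 16) * franel (Suc n) + 8 * (real n + 1)^2 * franel n) / (real n + 2)^2"

lemma franel_unique:
  assumes "\<And>n. franel_op a n = 0" and "a 0 = 1" and "a 1 = 2"
  shows "a n = franel n"
proof (induction n rule: franel.induct)
  case (3 n)
  have "(real n + 2)^2 \<noteq> 0" by simp
  with assms(1)[of n] "3.IH" show ?case
    by (simp add: franel_op_def field_simps)
qed (use assms in simp_all)

lemma telescoping_annihilates:
  assumes vanish: "\<And>n k. n < k \<Longrightarrow> F n k = 0"
    and tele: "\<And>n k. franel_op (\<lambda>m. F m k) n = G n (k + 1) - G n k"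
    and bottom: "\<And>n. G n 0 = 0" and top: "\<And>n. G n (n + 3) = 0"
  shows "franel_op (\<lambda>m. \<Sum>k\<le>m. F m k) n = 0"
proof -
  have row: "(\<Sum>k\<le>m. F m k) = (\<Sum>k<n + 3. F m k)" if "m \<le> n + 2" for m
    by (rule sum.mono_neutral_left) (use that vanish in auto)
  have "(\<Sum>k\<le>n + 2. F (n + 2) k) = (\<Sum>k<n + 3. F (n + 2) k)"
       "(\<Sum>k\<le>n + 1. F (n + 1) k) = (\<Sum>k<n + 3. F (n + 1) k)"
       "(\<Sum>k\<le>n. F n k) = (\<Sum>k<n + 3. F n k)"
    by (rule row; simp)+
  then have "franel_op (\<lambda>m. \<Sum>k\<le>m. F m k) n = franel_op (\<lambda>m. \<Sum>k<n + 3. F m k) n"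
    unfolding franel_op_def by simp
  also have "\<dots> = (\<Sum>k<n + 3. G n (Suc k) - G n k)"
    by (simp add: franel_op_sum tele)
  also have "\<dots> = 0"
    by (simp add: sum_lessThan_telescope bottom top)
  finally show ?thesis .
qed

lemma telescoping_franel:
  assumes "\<And>n k. n < k \<Longrightarrow> F n k = 0"
    and "\<And>n k. franel_op (\<lambda>m. F m k) n = G n (k + 1) - G n k"
    and "\<And>n. G n 0 = 0" and "\<And>n. G n (n + 3) = 0"
    and "F 0 0 = 1" and "F 1 0 + F 1 1 = 2"
  shows "(\<Sum>k\<le>n. F n k) = franel n"
  by (rule franel_unique[where a = "\<lambda>m. \<Sum>k\<le>m. F m k"])
     (use telescoping_annihilates[OF assms(1-4)] assms(5,6) in simp_all)


section \<open>Binomial coefficients through reciprocal factorials\<close>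

text \<open>With it,
  \<open>C(A,B) = A! \<cdot> rfact B \<cdot> rfact (A-B)\<close> holds for all \<open>A, B\<close>, including \<open>B > A\<close>, so shifting
  indices never requires case distinctions.\<close>

definition rfact :: "int \<Rightarrow> real" where
  "rfact z = (if z < 0 then 0 else 1 / fact (nat z))"

lemma rfact_pred: "rfact (z - 1) = of_int z * rfact z"
proof (cases "z > 0")
  case True
  define m where "m = nat (z - 1)"
  have z: "z = int m + 1" and nat_z: "nat z = Suc m"
    using True unfolding m_def by simp_all
  have "rfact (z - 1) = 1 / fact m" "rfact z = 1 / ((real m + 1) * fact m)"
    unfolding rfact_def using z nat_z by (simp_all add: algebra_simps)
  then show ?thesis
    using z by simp
qed (auto simp: rfact_def)

lemma rfact_shift1: "b = a + 1 \<Longrightarrow> rfact a = of_int b * rfact b"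
  using rfact_pred[of b] by simp

lemma rfact_shift2: "b = a + 2 \<Longrightarrow> rfact a = of_int (a + 1) * of_int b * rfact b"
  using rfact_shift1[of "a + 1" a] rfact_shift1[of b "a + 1"] by simp

lemma rfact_fact: "rfact (int m) * fact m = 1"
  by (simp add: rfact_def)

lemma binomial_rfact: "real (A choose B) = fact A * rfact (int B) * rfact (int A - int B)"
proof (cases "B \<le> A")
  case True
  then have "rfact (int B) = 1 / fact B" "rfact (int A - int B) = 1 / fact (A - B)"
    by (simp_all add: rfact_def flip: of_nat_diff)
  moreover have "real (A choose B) = fact A / (fact B * fact (A - B))"
    using True by (rule binomial_fact)
  ultimately show ?thesis
    by simp
qed (simp add: rfact_def)

lemma fact_plus1: "(fact (n + 1) :: real) = (real n + 1) * fact n"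
  by (simp add: algebra_simps)

lemma fact_plus2: "(fact (n + 2) :: real) = (real n + 1) * (real n + 2) * fact n"
  by (simp add: algebra_simps)


section \<open>The five summands and their certificates\<close>

text \<open>Each certificate identity below is proved the same way: every factorial and reciprocal
  factorial occurring in \<open>F(n+2,k), F(n+1,k), F(n,k), G(n,k+1), G(n,k)\<close> is written as a
  polynomial multiple of a few common "base" values (named locally \<open>r, s, u, v, \<dots>\<close>), after which
  the identity is a polynomial identity in these base values, \<open>n\<close> and \<open>k\<close>.\<close>

definition cube_term :: "nat \<Rightarrow> nat \<Rightarrow> real" where
  "cube_term n k = real (n choose k) ^ 3"

definition cube_poly :: "real \<Rightarrow> real \<Rightarrow> real" where
  "cube_poly x y = 4*y^3 - 30*y^2 - 18*x*y^2 + 78*y + 93*x*y + 27*x^2*y - 72 - 128*x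
     - 74*x^2 - 14*x^3"

definition cube_cert :: "nat \<Rightarrow> nat \<Rightarrow> real" where
  "cube_cert n k = (if k = 0 then 0
     else cube_poly (real n) (real k) / (real n + 1) * real ((n + 1) choose (k - 1)) ^ 3)"

text \<open>The polynomial identity behind the certificate; \<open>x = n\<close>, \<open>y = k - 1\<close>.\<close>

lemma cube_identity:
  fixes x y a r s :: real
  shows "(x+2)^2 * ((x+1)*(x+2)*a*r*s)^3 - (7*x^2+21*x+16) * ((x+1)*a*r*((x-y+1)*s))^3
      - 8*(x+1)^2 * (a*r*((x-y)*(x-y+1)*s))^3
    = cube_poly x (y+2) * (x+1)^2 * (a*r*((x-y+1)*s))^3
      - cube_poly x (y+1) * (x+1)^2 * (a*((y+1)*r)*s)^3"
  unfolding cube_poly_def by algebra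

text \<open>The certificate carries a denominator \<open>n + 1\<close> that cancels against the cube.\<close>

lemma divide_cube: "(x :: real) + 1 \<noteq> 0 \<Longrightarrow> p / (x + 1) * ((x + 1) * w)^3 = p * (x + 1)^2 * w^3"
  by (simp add: power_mult_distrib power3_eq_cube power2_eq_square field_simps)

lemma cube_telescoping:
  "franel_op (\<lambda>m. cube_term m k) n = cube_cert n (k + 1) - cube_cert n k"
proof (cases k)
  case 0
  then show ?thesis
    by (simp add: franel_op_def cube_term_def cube_cert_def cube_poly_def power2_eq_square
        power3_eq_cube field_simps)
next
  case (Suc j)
  have nz: "real n + 1 \<noteq> 0" by simp
  define r where "r = rfact (int j + 1)"
  define s where "s = rfact (int n - int j + 1)"
  have r1: "rfact (int (Suc j)) = r" unfolding r_def by (simp add: algebra_simps)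
  have r0: "rfact (int j) = (real j + 1) * r"
    unfolding r_def by (subst rfact_shift1[where b = "int j + 1"]) simp_all
  have s2: "rfact (int (n + 2) - int (Suc j)) = s" unfolding s_def by (simp add: algebra_simps)
  have s1: "rfact (int (n + 1) - int (Suc j)) = (real n - real j + 1) * s"
    unfolding s_def by (subst rfact_shift1[where b = "int n - int j + 1"]) simp_all
  have s1': "rfact (int (n + 1) - int j) = s" unfolding s_def by (simp add: algebra_simps)
  have s0: "rfact (int n - int (Suc j)) = (real n - real j) * (real n - real j + 1) * s"
    unfolding s_def by (subst rfact_shift2[where b = "int n - int j + 1"]) (simp_all add: algebra_simps)
  have L: "cube_term (n + 2) k = ((real n + 1) * (real n + 2) * fact n * r * s)^3"
    unfolding cube_term_def Suc binomial_rfact r1 s2 fact_plus2 by simp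
  have M: "cube_term (n + 1) k = ((real n + 1) * fact n * r * ((real n - real j + 1) * s))^3"
    unfolding cube_term_def Suc binomial_rfact r1 s1 fact_plus1 by simp
  have N: "cube_term n k = (fact n * r * ((real n - real j) * (real n - real j + 1) * s))^3"
    unfolding cube_term_def Suc binomial_rfact r1 s0 by simp
  have "cube_cert n (k + 1) = cube_poly (real n) (real j + 2) / (real n + 1)
      * real ((n + 1) choose (Suc j)) ^ 3"
    unfolding cube_cert_def Suc by (simp add: algebra_simps)
  also have "\<dots> = cube_poly (real n) (real j + 2) / (real n + 1)
      * ((real n + 1) * (fact n * r * ((real n - real j + 1) * s)))^3"
    unfolding binomial_rfact r1 s1 fact_plus1 by (simp add: algebra_simps)
  finally have P: "cube_cert n (k + 1)
      = cube_poly (real n) (real j + 2) * (real n + 1)^2 * (fact n * r * ((real n - real j + 1) * s))^3"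
    by (simp only: divide_cube[OF nz])
  have "cube_cert n k = cube_poly (real n) (real j + 1) / (real n + 1)
      * real ((n + 1) choose j) ^ 3"
    unfolding cube_cert_def Suc by (simp add: algebra_simps)
  also have "\<dots> = cube_poly (real n) (real j + 1) / (real n + 1)
      * ((real n + 1) * (fact n * ((real j + 1) * r) * s))^3"
    unfolding binomial_rfact r0 s1' fact_plus1 by (simp add: algebra_simps)
  finally have Q: "cube_cert n k
      = cube_poly (real n) (real j + 1) * (real n + 1)^2 * (fact n * ((real j + 1) * r) * s)^3"
    by (simp only: divide_cube[OF nz])
  show ?thesis
    unfolding franel_op_def L M N P Q by (rule cube_identity)
qed

lemma cube_sum: "(\<Sum>k\<le>n. cube_term n k) = franel n"
  by (rule telescoping_franel[where G = cube_cert, OF _ cube_telescoping])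
     (simp_all add: cube_term_def cube_cert_def binomial_eq_0 del: binomial_Suc_Suc)


definition sqbin_term :: "nat \<Rightarrow> nat \<Rightarrow> real" where
  "sqbin_term n k = real (n choose k) ^ 2 * real ((2 * k) choose n)"

definition sqbin_cert :: "nat \<Rightarrow> nat \<Rightarrow> real" where
  "sqbin_cert n k = (if k = 0 then 0
     else real k * (4 * real k - 6 * real n - 12) * real ((n + 1) choose (k - 1)) ^ 2
          * real ((2 * k - 1) choose (n + 1)))"

text \<open>The polynomial identity behind the certificate; \<open>x = n\<close>, \<open>y = k - 1\<close>.\<close>

lemma sqbin_identity:
  fixes x y a r s f u v :: real
  shows "(x+2)^2 * (((x+1)*(x+2)*a*r*s)^2 * ((2*y+2)*f) * u * ((2*y-x+1)*(2*y-x+2)*v))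
      - (7*x^2+21*x+16) * (((x+1)*a*r*((x-y+1)*s))^2 * ((2*y+2)*f) * ((x+2)*u) * ((2*y-x+2)*v))
      - 8*(x+1)^2 * ((a*r*((x-y)*(x-y+1)*s))^2 * ((2*y+2)*f) * ((x+1)*(x+2)*u) * v)
    = (y+2)*(4*(y+2)-6*x-12) * ((x+1)*a*r*((x-y+1)*s))^2 * ((2*y+3)*(2*y+2)*f) * ((x+2)*u) * v
      - (y+1)*(4*(y+1)-6*x-12) * ((x+1)*a*((y+1)*r)*s)^2 * f * ((x+2)*u)
        * ((2*y-x+1)*(2*y-x+2)*v)"
  by algebra

lemma sqbin_telescoping:
  "franel_op (\<lambda>m. sqbin_term m k) n = sqbin_cert n (k + 1) - sqbin_cert n k"
proof (cases k)
  case 0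
  then show ?thesis
    by (cases n) (simp_all add: franel_op_def sqbin_term_def sqbin_cert_def)
next
  case (Suc j)
  define r where "r = rfact (int (Suc j))"
  define s where "s = rfact (int (n + 1) - int j)"
  define u where "u = rfact (int (n + 2))"
  define v where "v = rfact (int (2 * Suc j) - int n)"
  define f where "f = (fact (2 * j + 1) :: real)"
  have r0: "rfact (int j) = (real j + 1) * r"
    unfolding r_def by (subst rfact_shift1[where b = "int (Suc j)"]) simp_all
  have s2: "rfact (int (n + 2) - int (Suc j)) = s" unfolding s_def by (simp add: algebra_simps)
  have s1: "rfact (int (n + 1) - int (Suc j)) = (real n - real j + 1) * s"
    unfolding s_def by (subst rfact_shift1[where b = "int (n + 1) - int j"]) simp_all
  have s0: "rfact (int n - int (Suc j)) = (real n - real j) * (real n - real j + 1) * s"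
    unfolding s_def by (subst rfact_shift2[where b = "int (n + 1) - int j"]) (simp_all add: algebra_simps)
  have u1: "rfact (int (n + 1)) = (real n + 2) * u"
    unfolding u_def by (subst rfact_shift1[where b = "int (n + 2)"]) simp_all
  have u0: "rfact (int n) = (real n + 1) * (real n + 2) * u"
    unfolding u_def by (subst rfact_shift2[where b = "int (n + 2)"]) (simp_all add: algebra_simps)
  have v2: "rfact (int (2 * Suc j) - int (n + 2)) = (2 * real j - real n + 1) * (2 * real j - real n + 2) * v"
    unfolding v_def by (subst rfact_shift2[where b = "int (2 * Suc j) - int n"]) (simp_all add: algebra_simps)
  have v1: "rfact (int (2 * Suc j) - int (n + 1)) = (2 * real j - real n + 2) * v"
    unfolding v_def by (subst rfact_shift1[where b = "int (2 * Suc j) - int n"]) (simp_all add: algebra_simps)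
  have v1': "rfact (int (2 * Suc j - 1) - int (n + 1)) = (2 * real j - real n + 1) * (2 * real j - real n + 2) * v"
    unfolding v_def by (subst rfact_shift2[where b = "int (2 * Suc j) - int n"]) (simp_all add: algebra_simps)
  have v0: "rfact (int (2 * Suc (Suc j) - 1) - int (n + 1)) = v"
    unfolding v_def by (simp add: algebra_simps)
  have f2: "(fact (2 * Suc j) :: real) = (2 * real j + 2) * f"
    unfolding f_def by (simp add: algebra_simps)
  have f1: "(fact (2 * Suc j - 1) :: real) = f"
    unfolding f_def by simp
  have f3: "(fact (2 * Suc (Suc j) - 1) :: real) = (2 * real j + 3) * (2 * real j + 2) * f"
    unfolding f_def by (simp add: algebra_simps numeral_3_eq_3)
  have L: "sqbin_term (n + 2) k = ((real n + 1) * (real n + 2) * fact n * r * s)^2 * ((2 * real j + 2) * f)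
      * u * ((2 * real j - real n + 1) * (2 * real j - real n + 2) * v)"
    unfolding sqbin_term_def Suc binomial_rfact r_def[symmetric] s2 u_def[symmetric] v2 f2 fact_plus2
    by simp
  have M: "sqbin_term (n + 1) k = ((real n + 1) * fact n * r * ((real n - real j + 1) * s))^2
      * ((2 * real j + 2) * f) * ((real n + 2) * u) * ((2 * real j - real n + 2) * v)"
    unfolding sqbin_term_def Suc binomial_rfact r_def[symmetric] s1 u1 v1 f2 fact_plus1 by simp
  have N: "sqbin_term n k = (fact n * r * ((real n - real j) * (real n - real j + 1) * s))^2
      * ((2 * real j + 2) * f) * ((real n + 1) * (real n + 2) * u) * v"
    unfolding sqbin_term_def Suc binomial_rfact r_def[symmetric] s0 u0 v_def[symmetric] f2 by simp
  have "sqbin_cert n (k + 1) = real (Suc (Suc j)) * (4 * real (Suc (Suc j)) - 6 * real n - 12)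
      * real ((n + 1) choose (Suc j)) ^ 2 * real ((2 * Suc (Suc j) - 1) choose (n + 1))"
    unfolding sqbin_cert_def Suc by simp
  then have P: "sqbin_cert n (k + 1) = (real j + 2) * (4 * (real j + 2) - 6 * real n - 12)
      * ((real n + 1) * fact n * r * ((real n - real j + 1) * s))^2
      * ((2 * real j + 3) * (2 * real j + 2) * f) * ((real n + 2) * u) * v"
    unfolding binomial_rfact r_def[symmetric] s1 u1 v0 f3 fact_plus1 by (simp add: algebra_simps)
  have "sqbin_cert n k = real (Suc j) * (4 * real (Suc j) - 6 * real n - 12)
      * real ((n + 1) choose j) ^ 2 * real ((2 * Suc j - 1) choose (n + 1))"
    unfolding sqbin_cert_def Suc by simp
  then have Q: "sqbin_cert n k = (real j + 1) * (4 * (real j + 1) - 6 * real n - 12)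
      * ((real n + 1) * fact n * ((real j + 1) * r) * s)^2 * f * ((real n + 2) * u)
      * ((2 * real j - real n + 1) * (2 * real j - real n + 2) * v)"
    unfolding binomial_rfact r0 s_def[symmetric] u1 v1' f1 fact_plus1 by (simp add: algebra_simps)
  show ?thesis
    unfolding franel_op_def L M N P Q by (rule sqbin_identity)
qed

lemma sqbin_sum: "(\<Sum>k\<le>n. sqbin_term n k) = franel n"
  by (rule telescoping_franel[where G = sqbin_cert, OF _ sqbin_telescoping])
     (simp_all add: sqbin_term_def sqbin_cert_def binomial_eq_0 del: binomial_Suc_Suc)

definition neg4_term :: "nat \<Rightarrow> nat \<Rightarrow> real" where
  "neg4_term n k = real ((n + 2 * k) choose (3 * k)) * real ((2 * k) choose k)
     * real ((3 * k) choose k) * (-4) ^ (n - k)"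

definition neg4_cert :: "nat \<Rightarrow> nat \<Rightarrow> real" where
  "neg4_cert n k = -3 * (3 * real n + 5) * fact (n + 2 * k) * rfact (int k - 1)^3
     * rfact (int n + 2 - int k) * (-4)^(n + 2) * (-1/4)^k"

lemma neg4_term_rfact:
  "neg4_term n k = fact (n + 2 * k) * rfact (int k)^3 * rfact (int n - int k) * (-4)^n * (-1/4)^k"
proof (cases "k \<le> n")
  case True
  have "((-4)::real)^n = (-4)^(n - k) * (-4)^k"
    using True by (simp flip: power_add)
  then have pow: "((-4)::real)^(n - k) = (-4)^n * (-1/4)^k"
    by (simp add: power_divide field_simps flip: power_mult_distrib)
  have "neg4_term n k
      = (fact (n + 2 * k) * rfact (int (3 * k)) * rfact (int (n + 2 * k) - int (3 * k)))
      * (fact (2 * k) * rfact (int k) * rfact (int (2 * k) - int k))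
      * (fact (3 * k) * rfact (int k) * rfact (int (3 * k) - int k)) * (-4)^(n - k)"
    unfolding neg4_term_def binomial_rfact by simp
  also have "\<dots> = fact (n + 2 * k) * rfact (int k)^3 * rfact (int n - int k) * (-4)^(n - k)
      * (rfact (int (3 * k)) * fact (3 * k)) * (rfact (int (2 * k)) * fact (2 * k))"
    by (simp add: power3_eq_cube algebra_simps)
  finally show ?thesis
    unfolding rfact_fact pow by simp
qed (simp add: neg4_term_def rfact_def)

text \<open>The polynomial identity behind the certificate; \<open>x = n\<close>, \<open>y = k\<close>.\<close>

lemma neg4_identity:
  fixes x y a r s e q :: real
  shows "(x+2)^2 * ((x+2*y+1)*(x+2*y+2)*a * r^3 * s * (16*e) * q)
      - (7*x^2+21*x+16) * ((x+2*y+1)*a * r^3 * ((x-y+2)*s) * (-4*e) * q)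
      - 8*(x+1)^2 * (a * r^3 * ((x-y+1)*(x-y+2)*s) * e * q)
    = -3*(3*x+5)*((x+2*y+1)*(x+2*y+2)*a)*r^3*((x-y+2)*s)*(16*e)*(-1/4*q)
      - (-3*(3*x+5)*a*(y*r)^3*s*(16*e)*q)"
  by algebra

lemma neg4_telescoping:
  "franel_op (\<lambda>m. neg4_term m k) n = neg4_cert n (k + 1) - neg4_cert n k"
proof -
  define a where "a = (fact (n + 2 * k) :: real)"
  define r where "r = rfact (int k)"
  define s where "s = rfact (int n + 2 - int k)"
  define e where "e = ((-4)::real)^n"
  define q where "q = ((-1/4)::real)^k"
  have a2: "(fact (n + 2 + 2 * k) :: real) = (real n + 2 * real k + 1) * (real n + 2 * real k + 2) * a"
       "(fact (n + 2 * (k + 1)) :: real) = (real n + 2 * real k + 1) * (real n + 2 * real k + 2) * a"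
    unfolding a_def using fact_plus2[of "n + 2 * k"] by (simp_all add: algebra_simps)
  have a1: "(fact (n + 1 + 2 * k) :: real) = (real n + 2 * real k + 1) * a"
    unfolding a_def using fact_plus1[of "n + 2 * k"] by (simp add: algebra_simps)
  have s2: "rfact (int (n + 2) - int k) = s" unfolding s_def by (simp add: algebra_simps)
  have s1: "rfact (int (n + 1) - int k) = (real n - real k + 2) * s"
           "rfact (int n + 2 - int (k + 1)) = (real n - real k + 2) * s"
    unfolding s_def by (subst rfact_shift1[where b = "int n + 2 - int k"]; simp add: algebra_simps)+
  have s0: "rfact (int n - int k) = (real n - real k + 1) * (real n - real k + 2) * s"
    unfolding s_def by (subst rfact_shift2[where b = "int n + 2 - int k"]) (simp_all add: algebra_simps)
  have r1: "rfact (int k - 1) = real k * r" "rfact (int (k + 1) - 1) = r"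
    unfolding r_def by (simp_all add: rfact_pred)
  have e2: "((-4)::real)^(n + 2) = 16 * e" and e1: "((-4)::real)^(n + 1) = -4 * e"
    unfolding e_def by (simp_all add: power_add)
  have q1: "((-1/4)::real)^(k + 1) = -1/4 * q"
    unfolding q_def by (simp add: power_add)
  have L: "neg4_term (n + 2) k = (real n + 2 * real k + 1) * (real n + 2 * real k + 2) * a * r^3 * s * (16 * e) * q"
    unfolding neg4_term_rfact a2 s2 e2 r_def[symmetric] q_def[symmetric] by simp
  have M: "neg4_term (n + 1) k = (real n + 2 * real k + 1) * a * r^3 * ((real n - real k + 2) * s) * (-4 * e) * q"
    unfolding neg4_term_rfact a1 s1 e1 r_def[symmetric] q_def[symmetric] by simp
  have N: "neg4_term n k = a * r^3 * ((real n - real k + 1) * (real n - real k + 2) * s) * e * q"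
    unfolding neg4_term_rfact s0 e_def[symmetric] a_def[symmetric] r_def[symmetric] q_def[symmetric]
    by simp
  have P: "neg4_cert n (k + 1) = -3 * (3 * real n + 5) * ((real n + 2 * real k + 1) * (real n + 2 * real k + 2) * a)
      * r^3 * ((real n - real k + 2) * s) * (16 * e) * (-1/4 * q)"
    unfolding neg4_cert_def a2 r1 s1 e2 q1 by simp
  have Q: "neg4_cert n k = -3 * (3 * real n + 5) * a * (real k * r)^3 * s * (16 * e) * q"
    unfolding neg4_cert_def r1 e2 a_def[symmetric] s_def[symmetric] q_def[symmetric] by simp
  show ?thesis
    unfolding franel_op_def L M N P Q by (rule neg4_identity)
qed

lemma neg4_sum: "(\<Sum>k\<le>n. neg4_term n k) = franel n"
  by (rule telescoping_franel[where G = neg4_cert, OF _ neg4_telescoping])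
     (simp_all add: neg4_term_def neg4_cert_def rfact_def numeral_3_eq_3)

definition pow2_term :: "nat \<Rightarrow> nat \<Rightarrow> real" where
  "pow2_term n k = real ((n + k) choose (3 * k)) * real ((2 * k) choose k)
     * real ((3 * k) choose k) * 2 ^ (n - 2 * k)"

definition pow2_cert :: "nat \<Rightarrow> nat \<Rightarrow> real" where
  "pow2_cert n k = -6 * (3 * real n + 4) * fact (n + k) * rfact (int n + 2 - 2 * int k)
     * rfact (int k - 1)^3 * 2^(n + 2) * (1/4)^k"

lemma pow2_term_rfact:
  "pow2_term n k = fact (n + k) * rfact (int k)^3 * rfact (int n - 2 * int k) * 2^n * (1/4)^k"
proof (cases "2 * k \<le> n")
  case True
  have "(2::real)^n = 2^(n - 2 * k) * 2^(2 * k)"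
    using True by (simp flip: power_add)
  moreover have "(4::real)^k = 2^(2 * k)"
    by (simp add: power_mult)
  ultimately have pow: "(2::real)^(n - 2 * k) = 2^n * (1/4)^k"
    by (simp add: power_divide)
  have "pow2_term n k
      = (fact (n + k) * rfact (int (3 * k)) * rfact (int (n + k) - int (3 * k)))
      * (fact (2 * k) * rfact (int k) * rfact (int (2 * k) - int k))
      * (fact (3 * k) * rfact (int k) * rfact (int (3 * k) - int k)) * 2^(n - 2 * k)"
    unfolding pow2_term_def binomial_rfact by simp
  also have "int (n + k) - int (3 * k) = int n - 2 * int k"
    by simp
  also have "fact (n + k) * rfact (int (3 * k)) * rfact (int n - 2 * int k)
      * (fact (2 * k) * rfact (int k) * rfact (int (2 * k) - int k))
      * (fact (3 * k) * rfact (int k) * rfact (int (3 * k) - int k)) * 2^(n - 2 * k)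
    = fact (n + k) * rfact (int k)^3 * rfact (int n - 2 * int k) * 2^(n - 2 * k)
      * (rfact (int (3 * k)) * fact (3 * k)) * (rfact (int (2 * k)) * fact (2 * k))"
    by (simp add: power3_eq_cube algebra_simps)
  finally show ?thesis
    unfolding rfact_fact pow by simp
qed (simp add: pow2_term_def rfact_def)

text \<open>The polynomial identity behind the certificate; \<open>x = n\<close>, \<open>y = k\<close>.\<close>

lemma pow2_identity:
  fixes x y a r s e q :: real
  shows "(x+2)^2 * ((x+y+1)*(x+y+2)*a * r^3 * s * (4*e) * q)
      - (7*x^2+21*x+16) * ((x+y+1)*a * r^3 * ((x-2*y+2)*s) * (2*e) * q)
      - 8*(x+1)^2 * (a * r^3 * ((x-2*y+1)*(x-2*y+2)*s) * e * q)
    = -6*(3*x+4)*((x+y+1)*a)*((x-2*y+1)*(x-2*y+2)*s)*r^3*(4*e)*(1/4*q)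
      - (-6*(3*x+4)*a*s*(y*r)^3*(4*e)*q)"
  by algebra

lemma pow2_telescoping:
  "franel_op (\<lambda>m. pow2_term m k) n = pow2_cert n (k + 1) - pow2_cert n k"
proof -
  define a where "a = (fact (n + k) :: real)"
  define r where "r = rfact (int k)"
  define s where "s = rfact (int n + 2 - 2 * int k)"
  define e where "e = (2::real)^n"
  define q where "q = ((1/4)::real)^k"
  have a2: "(fact (n + 2 + k) :: real) = (real n + real k + 1) * (real n + real k + 2) * a"
    unfolding a_def using fact_plus2[of "n + k"] by (simp add: algebra_simps)
  have a1: "(fact (n + 1 + k) :: real) = (real n + real k + 1) * a"
           "(fact (n + (k + 1)) :: real) = (real n + real k + 1) * a"
    unfolding a_def using fact_plus1[of "n + k"] by (simp_all add: algebra_simps)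
  have s2: "rfact (int (n + 2) - 2 * int k) = s" unfolding s_def by (simp add: algebra_simps)
  have s1: "rfact (int (n + 1) - 2 * int k) = (real n - 2 * real k + 2) * s"
    unfolding s_def by (subst rfact_shift1[where b = "int n + 2 - 2 * int k"]) (simp_all add: algebra_simps)
  have s0: "rfact (int n - 2 * int k) = (real n - 2 * real k + 1) * (real n - 2 * real k + 2) * s"
           "rfact (int n + 2 - 2 * int (k + 1)) = (real n - 2 * real k + 1) * (real n - 2 * real k + 2) * s"
    unfolding s_def by (subst rfact_shift2[where b = "int n + 2 - 2 * int k"]; simp add: algebra_simps)+
  have r1: "rfact (int k - 1) = real k * r" "rfact (int (k + 1) - 1) = r"
    unfolding r_def by (simp_all add: rfact_pred)
  have e2: "(2::real)^(n + 2) = 4 * e" and e1: "(2::real)^(n + 1) = 2 * e"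
    unfolding e_def by (simp_all add: power_add)
  have q1: "((1/4)::real)^(k + 1) = 1/4 * q"
    unfolding q_def by (simp add: power_add)
  have L: "pow2_term (n + 2) k = (real n + real k + 1) * (real n + real k + 2) * a * r^3 * s * (4 * e) * q"
    unfolding pow2_term_rfact a2 s2 e2 r_def[symmetric] q_def[symmetric] by simp
  have M: "pow2_term (n + 1) k = (real n + real k + 1) * a * r^3 * ((real n - 2 * real k + 2) * s) * (2 * e) * q"
    unfolding pow2_term_rfact a1 s1 e1 r_def[symmetric] q_def[symmetric] by simp
  have N: "pow2_term n k = a * r^3 * ((real n - 2 * real k + 1) * (real n - 2 * real k + 2) * s) * e * q"
    unfolding pow2_term_rfact s0 e_def[symmetric] a_def[symmetric] r_def[symmetric] q_def[symmetric]
    by simp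
  have P: "pow2_cert n (k + 1) = -6 * (3 * real n + 4) * ((real n + real k + 1) * a)
      * ((real n - 2 * real k + 1) * (real n - 2 * real k + 2) * s) * r^3 * (4 * e) * (1/4 * q)"
    unfolding pow2_cert_def a1 r1 s0 e2 q1 by simp
  have Q: "pow2_cert n k = -6 * (3 * real n + 4) * a * s * (real k * r)^3 * (4 * e) * q"
    unfolding pow2_cert_def r1 e2 a_def[symmetric] s_def[symmetric] q_def[symmetric] by simp
  show ?thesis
    unfolding franel_op_def L M N P Q by (rule pow2_identity)
qed

lemma pow2_sum: "(\<Sum>k\<le>n. pow2_term n k) = franel n"
  by (rule telescoping_franel[where G = pow2_cert, OF _ pow2_telescoping])
     (simp_all add: pow2_term_def pow2_cert_def rfact_def)


definition central_binom :: "int \<Rightarrow> real" where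
  "central_binom z = (if z < 0 then 0 else real ((2 * nat z) choose (nat z)))"

lemma central_binom_rfact: "central_binom (int m) = fact (2 * m) * rfact (int m)^2"
proof -
  have "central_binom (int m) = fact (2 * m) * rfact (int m) * rfact (int (2 * m) - int m)"
    unfolding central_binom_def by (simp add: binomial_rfact)
  also have "int (2 * m) - int m = int m" by simp
  finally show ?thesis by (simp add: power2_eq_square)
qed

lemma central_binom_step: "of_int (z + 1) * central_binom (z + 1) = 2 * (2 * of_int z + 1) * central_binom z"
proof (cases "z < 0")
  case True
  then have "z = -1 \<or> z < -1" by linarith
  then show ?thesis by (auto simp: central_binom_def)
next
  case False
  then obtain m where z: "z = int m" by (metis nonneg_int_cases not_less)
  have f: "(fact (2 * (m + 1)) :: real) = (2 * real m + 1) * (2 * real m + 2) * fact (2 * m)"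
    using fact_plus2[of "2 * m"] by (simp add: algebra_simps)
  have r: "rfact (int m) = (real m + 1) * rfact (int (m + 1))"
    by (subst rfact_shift1[where b = "int (m + 1)"]) simp_all
  have z1: "z + 1 = int (m + 1)" using z by simp
  show ?thesis
    unfolding z1 unfolding z central_binom_rfact f r by (simp add: power2_eq_square algebra_simps)
qed

lemma odd_nonzero: "2 * (of_int z :: real) + 1 \<noteq> 0"
proof
  assume "2 * (of_int z :: real) + 1 = 0"
  then have "of_int (2 * z + 1) = (of_int 0 :: real)" by simp
  then have "2 * z + 1 = 0" by (simp only: of_int_eq_iff)
  then show False by presburger
qed

lemma central_binom_ladder:
  fixes m :: int
  obtains W where "central_binom (m + 2) = 4 * (2 * of_int m + 3) * (2 * of_int m + 1) * W"
    and "central_binom (m + 1) = 2 * (of_int m + 2) * (2 * of_int m + 1) * W"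
    and "central_binom m = (of_int m + 1) * (of_int m + 2) * W"
proof
  have nz1: "2 * (of_int m :: real) + 1 \<noteq> 0" by (rule odd_nonzero)
  have nz3: "2 * (of_int m :: real) + 3 \<noteq> 0" using odd_nonzero[of "m + 1"] by (simp add: algebra_simps)
  define W where "W = central_binom (m + 2) / (4 * (2 * of_int m + 3) * (2 * of_int m + 1))"
  show c2: "central_binom (m + 2) = 4 * (2 * of_int m + 3) * (2 * of_int m + 1) * W"
    unfolding W_def using nz1 nz3 by simp
  have "of_int (m + 2) * central_binom (m + 2) = 2 * (2 * of_int m + 3) * central_binom (m + 1)"
    using central_binom_step[of "m + 1"] by (simp add: algebra_simps)
  then have "2 * (2 * of_int m + 3) * central_binom (m + 1)
      = 2 * (2 * of_int m + 3) * (2 * (of_int m + 2) * (2 * of_int m + 1) * W)"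
    unfolding c2 by (simp add: algebra_simps)
  then show c1: "central_binom (m + 1) = 2 * (of_int m + 2) * (2 * of_int m + 1) * W"
    using nz3 by simp
  have "2 * (2 * of_int m + 1) * central_binom m = of_int (m + 1) * central_binom (m + 1)"
    by (rule central_binom_step[symmetric])
  then have "2 * (2 * of_int m + 1) * central_binom m
      = 2 * (2 * of_int m + 1) * ((of_int m + 1) * (of_int m + 2) * W)"
    unfolding c1 by (simp add: algebra_simps)
  then show "central_binom m = (of_int m + 1) * (of_int m + 2) * W"
    using nz1 by simp
qed

definition central_term :: "nat \<Rightarrow> nat \<Rightarrow> real" where
  "central_term n k = real ((2 * k) choose n) * real ((2 * k) choose k)
     * central_binom (int n - int k) * (1/2)^n"

definition central_poly :: "real \<Rightarrow> real \<Rightarrow> real" where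
  "central_poly x y = -28 + 24*y - 4*y^2 - 48*x + 26*x*y - 2*x*y^2 - 27*x^2 + 7*x^2*y - 5*x^3"

definition central_cert :: "nat \<Rightarrow> nat \<Rightarrow> real" where
  "central_cert n k = central_poly (real n) (real k) * real ((2 * k) choose (n + 2))
     * real ((2 * k) choose k) * (1/2)^(n + 2)
     * (central_binom (int n + 2 - int k) / (2 * real n - 2 * real k + 3))"

text \<open>The polynomial identity behind the certificate; \<open>x = n\<close>, \<open>y = k\<close>.\<close>

lemma central_identity:
  fixes x y a u v r W h :: real
  shows "(x+2)^2 * ((a*u*((2*y-x-1)*(2*y-x)*v)) * (a*r*((y+1)*((y+1)*r)))
        * (4*(2*(x-y)+3)*(2*(x-y)+1)*W) * h)
      - (7*x^2+21*x+16) * ((a*((x+2)*u)*((2*y-x)*v)) * (a*r*((y+1)*((y+1)*r)))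
        * (2*(x-y+2)*(2*(x-y)+1)*W) * (2*h))
      - 8*(x+1)^2 * ((a*((x+1)*(x+2)*u)*v) * (a*r*((y+1)*((y+1)*r)))
        * ((x-y+1)*(x-y+2)*W) * (4*h))
    = central_poly x (y+1) * (((2*y+1)*(2*y+2)*a) * u * v) * (((2*y+1)*(2*y+2)*a) * r * r) * h
        * (2*(x-y+2)*W)
      - central_poly x y * (a*u*((2*y-x-1)*(2*y-x)*v)) * (a*r*((y+1)*((y+1)*r))) * h
        * (4*(2*(x-y)+1)*W)"
  unfolding central_poly_def by algebra

lemma central_binom_values:
  obtains W where
    "central_binom (int (n + 2) - int k) = 4 * (2 * (real n - real k) + 3) * (2 * (real n - real k) + 1) * W"
    "central_binom (int (n + 1) - int k) = 2 * (real n - real k + 2) * (2 * (real n - real k) + 1) * W"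
    "central_binom (int n - int k) = (real n - real k + 1) * (real n - real k + 2) * W"
    "central_binom (int n + 2 - int (k + 1)) / (2 * real n - 2 * real (k + 1) + 3)
       = 2 * (real n - real k + 2) * W"
    "central_binom (int n + 2 - int k) / (2 * real n - 2 * real k + 3)
       = 4 * (2 * (real n - real k) + 1) * W"
proof -
  define m where "m = int n - int k"
  have m: "of_int m = real n - real k" unfolding m_def by simp
  obtain W where c2: "central_binom (m + 2) = 4 * (2 * of_int m + 3) * (2 * of_int m + 1) * W"
    and c1: "central_binom (m + 1) = 2 * (of_int m + 2) * (2 * of_int m + 1) * W"
    and c0: "central_binom m = (of_int m + 1) * (of_int m + 2) * W"
    by (rule central_binom_ladder)
  have nz1: "2 * (of_int m :: real) + 1 \<noteq> 0" by (rule odd_nonzero)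
  have nz3: "2 * (of_int m :: real) + 3 \<noteq> 0" using odd_nonzero[of "m + 1"] by (simp add: algebra_simps)
  have d1: "central_binom (m + 1) / (2 * of_int m + 1) = 2 * (of_int m + 2) * W"
    using c1 nz1 by simp
  have d2: "central_binom (m + 2) / (2 * of_int m + 3) = 4 * (2 * of_int m + 1) * W"
    using c2 nz3 by (simp add: field_simps)
  have eqs: "int (n + 2) - int k = m + 2" "int (n + 1) - int k = m + 1" "int n - int k = m"
       "int n + 2 - int (k + 1) = m + 1" "int n + 2 - int k = m + 2"
       "2 * real n - 2 * real (k + 1) + 3 = 2 * of_int m + 1"
       "2 * real n - 2 * real k + 3 = 2 * of_int m + 3"
    unfolding m_def by simp_all
  note ladder = c2 c1 c0 d1 d2
  show ?thesis
    by (rule that; unfold eqs m; rule ladder[unfolded m])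
qed

lemma central_telescoping:
  "franel_op (\<lambda>m. central_term m k) n = central_cert n (k + 1) - central_cert n k"
proof -
  obtain W where m2: "central_binom (int (n + 2) - int k)
        = 4 * (2 * (real n - real k) + 3) * (2 * (real n - real k) + 1) * W"
    and m1: "central_binom (int (n + 1) - int k) = 2 * (real n - real k + 2) * (2 * (real n - real k) + 1) * W"
    and m0: "central_binom (int n - int k) = (real n - real k + 1) * (real n - real k + 2) * W"
    and g1: "central_binom (int n + 2 - int (k + 1)) / (2 * real n - 2 * real (k + 1) + 3)
        = 2 * (real n - real k + 2) * W"
    and g0: "central_binom (int n + 2 - int k) / (2 * real n - 2 * real k + 3)
        = 4 * (2 * (real n - real k) + 1) * W"
    by (rule central_binom_values)
  define a where "a = (fact (2 * k) :: real)"
  define u where "u = rfact (int (n + 2))"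
  define v where "v = rfact (int (2 * k) - int n)"
  define r where "r = rfact (int (k + 1))"
  define h where "h = ((1/2)::real)^(n + 2)"
  have u1: "rfact (int (n + 1)) = (real n + 2) * u"
    unfolding u_def by (subst rfact_shift1[where b = "int (n + 2)"]) simp_all
  have u0: "rfact (int n) = (real n + 1) * (real n + 2) * u"
    unfolding u_def by (subst rfact_shift2[where b = "int (n + 2)"]) (simp_all add: algebra_simps)
  have v2: "rfact (int (2 * k) - int (n + 2)) = (2 * real k - real n - 1) * (2 * real k - real n) * v"
    unfolding v_def by (subst rfact_shift2[where b = "int (2 * k) - int n"]) (simp_all add: algebra_simps)
  have v1: "rfact (int (2 * k) - int (n + 1)) = (2 * real k - real n) * v"
    unfolding v_def by (subst rfact_shift1[where b = "int (2 * k) - int n"]) (simp_all add: algebra_simps)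
  have v0: "rfact (int (2 * (k + 1)) - int (n + 2)) = v"
    unfolding v_def by (simp add: algebra_simps)
  have r0: "rfact (int k) = (real k + 1) * r"
    unfolding r_def by (subst rfact_shift1[where b = "int (k + 1)"]) simp_all
  have "int (2 * k) - int k = int k" by simp
  then have rk: "rfact (int (2 * k) - int k) = (real k + 1) * r"
    using r0 by simp
  have rk': "rfact (int (2 * (k + 1)) - int (k + 1)) = r"
    unfolding r_def by (simp add: algebra_simps)
  have a2: "(fact (2 * (k + 1)) :: real) = (2 * real k + 1) * (2 * real k + 2) * a"
    unfolding a_def using fact_plus2[of "2 * k"] by (simp add: algebra_simps)
  have h2: "((1/2)::real)^(n + 1) = 2 * h" and h3: "((1/2)::real)^n = 4 * h"
    unfolding h_def by (simp_all add: power_add)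
  have L: "central_term (n + 2) k = (a * u * ((2 * real k - real n - 1) * (2 * real k - real n) * v))
      * (a * r * ((real k + 1) * ((real k + 1) * r)))
      * (4 * (2 * (real n - real k) + 3) * (2 * (real n - real k) + 1) * W) * h"
    unfolding central_term_def binomial_rfact a_def[symmetric] u_def[symmetric] v2 r0 rk m2
      h_def[symmetric] by simp
  have M: "central_term (n + 1) k = (a * ((real n + 2) * u) * ((2 * real k - real n) * v))
      * (a * r * ((real k + 1) * ((real k + 1) * r)))
      * (2 * (real n - real k + 2) * (2 * (real n - real k) + 1) * W) * (2 * h)"
    unfolding central_term_def binomial_rfact a_def[symmetric] u1 v1 r0 rk m1 h2 by simp
  have N: "central_term n k = (a * ((real n + 1) * (real n + 2) * u) * v)
      * (a * r * ((real k + 1) * ((real k + 1) * r)))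
      * ((real n - real k + 1) * (real n - real k + 2) * W) * (4 * h)"
    unfolding central_term_def binomial_rfact a_def[symmetric] u0 v_def[symmetric] r0 rk m0 h3 by simp
  have "central_poly (real n) (real (k + 1)) = central_poly (real n) (real k + 1)"
    by (simp add: add.commute)
  then have P: "central_cert n (k + 1) = central_poly (real n) (real k + 1)
      * (((2 * real k + 1) * (2 * real k + 2) * a) * u * v)
      * (((2 * real k + 1) * (2 * real k + 2) * a) * r * r) * h * (2 * (real n - real k + 2) * W)"
    unfolding central_cert_def binomial_rfact a2 u_def[symmetric] v0 r_def[symmetric] rk' g1
      h_def[symmetric] by simp
  have Q: "central_cert n k = central_poly (real n) (real k)
      * (a * u * ((2 * real k - real n - 1) * (2 * real k - real n) * v))
      * (a * r * ((real k + 1) * ((real k + 1) * r))) * h * (4 * (2 * (real n - real k) + 1) * W)"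
    unfolding central_cert_def binomial_rfact a_def[symmetric] u_def[symmetric] v2 r0 rk g0
      h_def[symmetric] by simp
  show ?thesis
    unfolding franel_op_def L M N P Q by (rule central_identity)
qed

lemma central_sum: "(\<Sum>k\<le>n. central_term n k) = franel n"
  by (rule telescoping_franel[where G = central_cert, OF _ central_telescoping])
     (simp_all add: central_term_def central_cert_def central_binom_def)


lemma sum_from_half:
  fixes f :: "nat \<Rightarrow> 'a :: comm_monoid_add"
  assumes "\<And>k. 2 * k < n \<Longrightarrow> f k = 0"
  shows "(\<Sum>k = nat \<lceil>real n / 2\<rceil>..n. f k) = (\<Sum>k\<le>n. f k)"
proof (rule sum.mono_neutral_left)
  show "\<forall>k \<in> {..n} - {nat \<lceil>real n / 2\<rceil>..n}. f k = 0"
  proof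
    fix k assume "k \<in> {..n} - {nat \<lceil>real n / 2\<rceil>..n}"
    then have "real k < real n / 2" by (auto simp: le_nat_iff ceiling_le_iff)
    then show "f k = 0" by (intro assms) linarith
  qed
qed auto

lemma franel_cubes: "(\<Sum>k = 0..n. real (n choose k) ^ 3) = franel n"
  using cube_sum by (simp add: cube_term_def atLeast0AtMost)

lemma franel_sqbin:
  "(\<Sum>k = nat \<lceil>real n / 2\<rceil>..n. real (n choose k) ^ 2 * real ((2 * k) choose n)) = franel n"
  using sum_from_half[of n "sqbin_term n"] sqbin_sum by (simp add: sqbin_term_def)

lemma franel_central:
  "(1 / 2 ^ n) * (\<Sum>k = nat \<lceil>real n / 2\<rceil>..n.
      real ((2 * k) choose n) * real ((2 * k) choose k) * real ((2 * n - 2 * k) choose (n - k)))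
    = franel n"
proof -
  have "(1 / 2 ^ n) * real ((2 * k) choose n) * real ((2 * k) choose k)
      * real ((2 * n - 2 * k) choose (n - k)) = central_term n k" if "k \<le> n" for k
  proof -
    have "central_binom (int n - int k) = real ((2 * n - 2 * k) choose (n - k))"
      using that by (simp add: central_binom_def nat_diff_distrib diff_mult_distrib2)
    then show ?thesis
      unfolding central_term_def by (simp add: power_divide)
  qed
  then have "(1 / 2 ^ n) * (\<Sum>k = nat \<lceil>real n / 2\<rceil>..n.
      real ((2 * k) choose n) * real ((2 * k) choose k) * real ((2 * n - 2 * k) choose (n - k)))
    = (\<Sum>k = nat \<lceil>real n / 2\<rceil>..n. central_term n k)"
    by (simp add: sum_distrib_left mult.assoc)
  also have "\<dots> = franel n"
    using sum_from_half[of n "central_term n"] central_sum by (simp add: central_term_def)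
  finally show ?thesis .
qed

lemma franel_neg4:
  "(\<Sum>k = 0..n. real ((n + 2 * k) choose (3 * k)) * real ((2 * k) choose k)
      * real ((3 * k) choose k) * (-4) ^ (n - k)) = franel n"
  using neg4_sum by (simp add: neg4_term_def atLeast0AtMost)

lemma franel_pow2:
  "(\<Sum>k = 0..n div 2. real ((n + k) choose (3 * k)) * real ((2 * k) choose k)
      * real ((3 * k) choose k) * 2 ^ (n - 2 * k)) = franel n"
proof -
  have "(\<Sum>k = 0..n div 2. pow2_term n k) = (\<Sum>k\<le>n. pow2_term n k)"
    by (rule sum.mono_neutral_left) (auto simp: pow2_term_def)
  then show ?thesis
    using pow2_sum by (simp add: pow2_term_def)
qed

theorem mainTheorem6:
  fixes n :: nat
  shows "real (E [n, n, n]) = (\<Sum>k = 0..n. real (n choose k) ^ 3)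
    \<and> (\<Sum>k = 0..n. real (n choose k) ^ 3)
        = (\<Sum>k = nat \<lceil>real n / 2\<rceil>..n. real (n choose k) ^ 2 * real ((2 * k) choose n))
    \<and> (\<Sum>k = nat \<lceil>real n / 2\<rceil>..n. real (n choose k) ^ 2 * real ((2 * k) choose n))
        = (1 / 2 ^ n) * (\<Sum>k = nat \<lceil>real n / 2\<rceil>..n.
             real ((2 * k) choose n) * real ((2 * k) choose k) * real ((2 * n - 2 * k) choose (n - k)))
    \<and> (1 / 2 ^ n) * (\<Sum>k = nat \<lceil>real n / 2\<rceil>..n.
             real ((2 * k) choose n) * real ((2 * k) choose k) * real ((2 * n - 2 * k) choose (n - k)))
        = (\<Sum>k = 0..n. real ((n + 2 * k) choose (3 * k)) * real ((2 * k) choose k)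
             * real ((3 * k) choose k) * (-4) ^ (n - k))
    \<and> (\<Sum>k = 0..n. real ((n + 2 * k) choose (3 * k)) * real ((2 * k) choose k)
             * real ((3 * k) choose k) * (-4) ^ (n - k))
        = (\<Sum>k = 0..n div 2. real ((n + k) choose (3 * k)) * real ((2 * k) choose k)
             * real ((3 * k) choose k) * 2 ^ (n - 2 * k))"
proof -
  have "real (E [n, n, n]) = (\<Sum>k = 0..n. real (n choose k) ^ 3)"
    by (simp add: E_three_hands atLeast0AtMost)
  then show ?thesis
    using franel_cubes franel_sqbin franel_central franel_neg4 franel_pow2 by simp
qed

end
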